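(* Let $u$ be a solution of the Degasperis–Procesi equation in the class $C^0([0,T);H^4(\mathbb{R}))\cap C^1([0,T);H^3(\mathbb{R}))$ and let $\omega_1,\omega_2,\omega_3$ be the one-forms below built from $u$. Consider the system, for unknown functions $\Gamma(x,t)$ and $\gamma(x,t)$, $$-2\,d\Gamma=\omega_3+\omega_2-2\Gamma\omega_1+\Gamma^2(\omega_3-\omega_2),\qquad 2\,d\gamma=\omega_3-\omega_2-2\gamma\omega_1+\gamma^2(\omega_3+\omega_2).$$ Then this system is completely integrable, and for its solutions the one-forms $$\theta=\omega_1-\Gamma(\omega_3-\omega_2),\qquad \hat\theta=-\omega_1+\gamma(\omega_3+\omega_2)$$ are closed on the solutions of the Degasperis–Procesi equation.
   Context: Degasperis–Procesi equation: $u_t-u_{txx}+4uu_x=3u_xu_{xx}+uu_{xxx}$. With $m=u-u_{xx}$, $F=u_x^2-2uu_x+uu_{xx}$, real $\mu$ and a fixed sign choice (upper signs together or lower together): $\omega_1=m\,dx+F\,dt$, $\omega_2=(\mu m\pm2\sqrt{1+\mu^2})dx+\mu F\,dt$, $\omega_3=(\pm\sqrt{1+\mu^2}\,m+2\mu)dx\pm\sqrt{1+\mu^2}\,F\,dt$. On solutions these satisfy $d\omega_1=\omega_3\wedge\omega_2$, $d\omega_2=\omega_1\wedge\omega_3$, $d\omega_3=\omega_1\wedge\omega_2$. *)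

theory Defs
  imports Complex_Main
begin

text \<open>A one-form on (a subset of) the (x,t)-plane, f dx + g dt, is represented by the
  pair (f, g) of its coefficient functions, each taking arguments x and t.\<close>
type_synonym form1 = "(real \<Rightarrow> real \<Rightarrow> real) \<times> (real \<Rightarrow> real \<Rightarrow> real)"

definition form_sub :: "form1 \<Rightarrow> form1 \<Rightarrow> form1" where
  "form_sub a b = ((\<lambda>x t. fst a x t - fst b x t), (\<lambda>x t. snd a x t - snd b x t))"

definition form_add :: "form1 \<Rightarrow> form1 \<Rightarrow> form1" where
  "form_add a b = ((\<lambda>x t. fst a x t + fst b x t), (\<lambda>x t. snd a x t + snd b x t))"

definition form_fmult :: "(real \<Rightarrow> real \<Rightarrow> real) \<Rightarrow> form1 \<Rightarrow> form1" where
  "form_fmult h a = ((\<lambda>x t. h x t * fst a x t), (\<lambda>x t. h x t * snd a x t))"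

definition form_neg :: "form1 \<Rightarrow> form1" where
  "form_neg a = ((\<lambda>x t. - fst a x t), (\<lambda>x t. - snd a x t))"

text \<open>Closedness of f dx + g dt on \<real> \<times> S: d(f dx + g dt) = (g_x - f_t) dx\<and>dt = 0,
  with the partial derivatives existing (the t-derivative taken within S).\<close>
definition closed_on :: "real set \<Rightarrow> form1 \<Rightarrow> bool" where
  "closed_on S w \<longleftrightarrow> (\<forall>x. \<forall>t\<in>S. \<exists>D.
      ((\<lambda>y. snd w y t) has_real_derivative D) (at x) \<and>
      ((\<lambda>s. fst w x s) has_real_derivative D) (at t within S))"

definition dp_m :: "(real \<Rightarrow> real \<Rightarrow> real) \<Rightarrow> (real \<Rightarrow> real \<Rightarrow> real) \<Rightarrow> real \<Rightarrow> real \<Rightarrow> real" where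
  "dp_m u uxx = (\<lambda>x t. u x t - uxx x t)"

definition dp_F :: "(real \<Rightarrow> real \<Rightarrow> real) \<Rightarrow> (real \<Rightarrow> real \<Rightarrow> real) \<Rightarrow> (real \<Rightarrow> real \<Rightarrow> real)
    \<Rightarrow> real \<Rightarrow> real \<Rightarrow> real" where
  "dp_F u ux uxx = (\<lambda>x t. (ux x t)\<^sup>2 - 2 * u x t * ux x t + u x t * uxx x t)"

text \<open>The one-forms omega1, omega2, omega3 (eps = +1 / -1 encodes the sign choice).\<close>
definition omega1 :: "(real \<Rightarrow> real \<Rightarrow> real) \<Rightarrow> (real \<Rightarrow> real \<Rightarrow> real) \<Rightarrow> form1" where
  "omega1 m F = (m, F)"

definition omega2 :: "real \<Rightarrow> real \<Rightarrow> (real \<Rightarrow> real \<Rightarrow> real) \<Rightarrow> (real \<Rightarrow> real \<Rightarrow> real) \<Rightarrow> form1" where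
  "omega2 mu eps m F =
     ((\<lambda>x t. mu * m x t + 2 * eps * sqrt (1 + mu\<^sup>2)), (\<lambda>x t. mu * F x t))"

definition omega3 :: "real \<Rightarrow> real \<Rightarrow> (real \<Rightarrow> real \<Rightarrow> real) \<Rightarrow> (real \<Rightarrow> real \<Rightarrow> real) \<Rightarrow> form1" where
  "omega3 mu eps m F =
     ((\<lambda>x t. eps * sqrt (1 + mu\<^sup>2) * m x t + 2 * mu), (\<lambda>x t. eps * sqrt (1 + mu\<^sup>2) * F x t))"

text \<open>A total differential equation dG = P(x,t,G) dx + Q(x,t,G) dt is given by the pair (P,Q).
  Solutions on \<real> \<times> S:\<close>
type_synonym pfaff = "(real \<Rightarrow> real \<Rightarrow> real \<Rightarrow> real) \<times> (real \<Rightarrow> real \<Rightarrow> real \<Rightarrow> real)"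

definition pfaff_solution :: "real set \<Rightarrow> pfaff \<Rightarrow> (real \<Rightarrow> real \<Rightarrow> real) \<Rightarrow> bool" where
  "pfaff_solution S PQ G \<longleftrightarrow> (\<forall>x. \<forall>t\<in>S.
      ((\<lambda>y. G y t) has_real_derivative fst PQ x t (G x t)) (at x) \<and>
      ((\<lambda>s. G x s) has_real_derivative snd PQ x t (G x t)) (at t within S))"

text \<open>Complete integrability (Frobenius condition) of dG = P dx + Q dt on \<real> \<times> S:
  P_t + P_z Q = Q_x + Q_z P identically in (x, t, z), z the fibre variable G.\<close>
definition completely_integrable :: "real set \<Rightarrow> pfaff \<Rightarrow> bool" where
  "completely_integrable S PQ \<longleftrightarrow> (\<forall>x. \<forall>t\<in>S. \<forall>z. \<exists>Pt Pz Qx Qz.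
      ((\<lambda>s. fst PQ x s z) has_real_derivative Pt) (at t within S) \<and>
      ((\<lambda>w. fst PQ x t w) has_real_derivative Pz) (at z) \<and>
      ((\<lambda>y. snd PQ y t z) has_real_derivative Qx) (at x) \<and>
      ((\<lambda>w. snd PQ x t w) has_real_derivative Qz) (at z) \<and>
      Pt + Pz * snd PQ x t z = Qx + Qz * fst PQ x t z)"

definition riccati_Gamma :: "form1 \<Rightarrow> form1 \<Rightarrow> form1 \<Rightarrow> pfaff" where
  "riccati_Gamma w1 w2 w3 =
     ((\<lambda>x t z. - (fst w3 x t + fst w2 x t - 2 * z * fst w1 x t + z\<^sup>2 * (fst w3 x t - fst w2 x t)) / 2),
      (\<lambda>x t z. - (snd w3 x t + snd w2 x t - 2 * z * snd w1 x t + z\<^sup>2 * (snd w3 x t - snd w2 x t)) / 2))"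

definition riccati_gamma :: "form1 \<Rightarrow> form1 \<Rightarrow> form1 \<Rightarrow> pfaff" where
  "riccati_gamma w1 w2 w3 =
     ((\<lambda>x t z. (fst w3 x t - fst w2 x t - 2 * z * fst w1 x t + z\<^sup>2 * (fst w3 x t + fst w2 x t)) / 2),
      (\<lambda>x t z. (snd w3 x t - snd w2 x t - 2 * z * snd w1 x t + z\<^sup>2 * (snd w3 x t + snd w2 x t)) / 2))"

end

theory Submission
  imports Defs
begin

(* The forms carry a pseudospherical structure: d\<omega>1 = \<omega>3 \<and> \<omega>2, d\<omega>2 = \<omega>1 \<and> \<omega>3 and
   d\<omega>3 = \<omega>1 \<and> \<omega>2. Since \<epsilon>\<^sup>2 (1 + \<mu>\<^sup>2) - \<mu>\<^sup>2 = 1, each of these reduces to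
   d\<omega>1 = -2 F dx \<and> dt, which is the Degasperis-Procesi equation written as m_t = F_x + 2 F.
   Both systems are Riccati equations dz = \<alpha> + z \<beta> + z\<^sup>2 \<gamma>, and the structure equations
   say that their coefficient forms satisfy the Maurer-Cartan equations of sl(2,R):
   d\<alpha> = \<beta> \<and> \<alpha>, d\<beta> = 2 \<gamma> \<and> \<alpha>, d\<gamma> = \<gamma> \<and> \<beta>. These are exactly the Frobenius
   condition of the Riccati equation; along a solution z they also make the z-derivative
   \<beta> + 2 z \<gamma> of its right-hand side closed, and \<theta>, \<theta>-hat are these forms. *)

definition form_wedge :: "form1 \<Rightarrow> form1 \<Rightarrow> real \<Rightarrow> real \<Rightarrow> real" where
  "form_wedge a b x t = fst a x t * snd b x t - snd a x t * fst b x t"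

definition has_exterior_derivative :: "real set \<Rightarrow> form1 \<Rightarrow> (real \<Rightarrow> real \<Rightarrow> real) \<Rightarrow> bool" where
  "has_exterior_derivative S w D \<longleftrightarrow> (\<forall>x. \<forall>t\<in>S. \<exists>ft gx.
      ((\<lambda>s. fst w x s) has_real_derivative ft) (at t within S) \<and>
      ((\<lambda>y. snd w y t) has_real_derivative gx) (at x) \<and> D x t = gx - ft)"

lemma has_exterior_derivativeE:
  assumes "has_exterior_derivative S w D" "t \<in> S"
  obtains ft gx where "((\<lambda>s. fst w x s) has_real_derivative ft) (at t within S)"
    "((\<lambda>y. snd w y t) has_real_derivative gx) (at x)" "D x t = gx - ft"
  using assms unfolding has_exterior_derivative_def by blast

lemma has_exterior_derivative_cong:
  assumes "has_exterior_derivative S w D" "\<And>x t. t \<in> S \<Longrightarrow> D x t = D' x t"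
  shows "has_exterior_derivative S w D'"
  using assms unfolding has_exterior_derivative_def by metis

lemma closed_on_iff_has_exterior_derivative_0:
  "closed_on S w \<longleftrightarrow> has_exterior_derivative S w (\<lambda>_ _. 0)"
  unfolding closed_on_def has_exterior_derivative_def by auto

lemma has_exterior_derivative_add:
  assumes "has_exterior_derivative S v D" "has_exterior_derivative S w E"
  shows "has_exterior_derivative S (form_add v w) (\<lambda>x t. D x t + E x t)"
  unfolding has_exterior_derivative_def form_add_def fst_conv snd_conv
proof (intro allI ballI)
  fix x t assume "t \<in> S"
  with assms obtain vt vx wt wx where
    "((\<lambda>s. fst v x s) has_real_derivative vt) (at t within S)"
    "((\<lambda>y. snd v y t) has_real_derivative vx) (at x)" "D x t = vx - vt"
    "((\<lambda>s. fst w x s) has_real_derivative wt) (at t within S)"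
    "((\<lambda>y. snd w y t) has_real_derivative wx) (at x)" "E x t = wx - wt"
    by (metis has_exterior_derivativeE)
  then show "\<exists>ft gx. ((\<lambda>s. fst v x s + fst w x s) has_real_derivative ft) (at t within S) \<and>
      ((\<lambda>y. snd v y t + snd w y t) has_real_derivative gx) (at x) \<and> D x t + E x t = gx - ft"
    by (intro exI[of _ "vt + wt"] exI[of _ "vx + wx"] conjI derivative_intros) auto
qed

lemma has_exterior_derivative_fmult:
  assumes "has_exterior_derivative S w D"
    and "\<And>x t. t \<in> S \<Longrightarrow> ((\<lambda>y. h y t) has_real_derivative fst dh x t) (at x)"
    and "\<And>x t. t \<in> S \<Longrightarrow> ((\<lambda>s. h x s) has_real_derivative snd dh x t) (at t within S)"
  shows "has_exterior_derivative S (form_fmult h w) (\<lambda>x t. form_wedge dh w x t + h x t * D x t)"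
  unfolding has_exterior_derivative_def form_fmult_def fst_conv snd_conv
proof (intro allI ballI)
  fix x t assume t: "t \<in> S"
  with assms(1) obtain wt wx where
    "((\<lambda>s. fst w x s) has_real_derivative wt) (at t within S)"
    "((\<lambda>y. snd w y t) has_real_derivative wx) (at x)" "D x t = wx - wt"
    by (rule has_exterior_derivativeE)
  with assms(2,3)[OF t] show "\<exists>ft gx. ((\<lambda>s. h x s * fst w x s) has_real_derivative ft) (at t within S) \<and>
      ((\<lambda>y. h y t * snd w y t) has_real_derivative gx) (at x) \<and>
      form_wedge dh w x t + h x t * D x t = gx - ft"
    by (intro exI[of _ "snd dh x t * fst w x t + h x t * wt"]
        exI[of _ "fst dh x t * snd w x t + h x t * wx"] conjI derivative_eq_intros) (auto simp: form_wedge_def algebra_simps)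
qed

lemma has_exterior_derivative_scale:
  assumes "has_exterior_derivative S w D"
  shows "has_exterior_derivative S (form_fmult (\<lambda>_ _. c) w) (\<lambda>x t. c * D x t)"
  using has_exterior_derivative_fmult[OF assms, of "\<lambda>_ _. c" "(\<lambda>_ _. 0, \<lambda>_ _. 0)"]
  by (simp add: form_wedge_def)

lemma has_exterior_derivative_neg:
  assumes "has_exterior_derivative S w D"
  shows "has_exterior_derivative S (form_neg w) (\<lambda>x t. - D x t)"
proof -
  have "form_neg w = form_fmult (\<lambda>_ _. -1) w"
    by (simp add: form_neg_def form_fmult_def)
  then show ?thesis
    using has_exterior_derivative_scale[OF assms, of "-1"] by simp
qed

lemma has_exterior_derivative_sub:
  assumes "has_exterior_derivative S v D" "has_exterior_derivative S w E"
  shows "has_exterior_derivative S (form_sub v w) (\<lambda>x t. D x t - E x t)"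
proof -
  have "form_sub v w = form_add v (form_neg w)"
    by (simp add: form_sub_def form_add_def form_neg_def)
  then show ?thesis
    using has_exterior_derivative_add[OF assms(1) has_exterior_derivative_neg[OF assms(2)]] by simp
qed

lemma has_exterior_derivative_affine:
  assumes "has_exterior_derivative S (f, g) D"
  shows "has_exterior_derivative S ((\<lambda>x t. a * f x t + b), (\<lambda>x t. a * g x t)) (\<lambda>x t. a * D x t)"
  unfolding has_exterior_derivative_def fst_conv snd_conv
proof (intro allI ballI)
  fix x t assume "t \<in> S"
  then obtain ft gx where "((\<lambda>s. f x s) has_real_derivative ft) (at t within S)"
    "((\<lambda>y. g y t) has_real_derivative gx) (at x)" "D x t = gx - ft"
    using has_exterior_derivativeE[OF assms] by (metis fst_conv snd_conv)
  then show "\<exists>ft gx. ((\<lambda>s. a * f x s + b) has_real_derivative ft) (at t within S) \<and>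
      ((\<lambda>y. a * g y t) has_real_derivative gx) (at x) \<and> a * D x t = gx - ft"
    by (intro exI[of _ "a * ft"] exI[of _ "a * gx"] conjI derivative_eq_intros)
      (auto simp: algebra_simps)
qed

definition riccati_pfaff :: "form1 \<Rightarrow> form1 \<Rightarrow> form1 \<Rightarrow> pfaff" where
  "riccati_pfaff \<alpha> \<beta> \<gamma> =
     ((\<lambda>x t z. fst \<alpha> x t + z * fst \<beta> x t + z\<^sup>2 * fst \<gamma> x t),
      (\<lambda>x t z. snd \<alpha> x t + z * snd \<beta> x t + z\<^sup>2 * snd \<gamma> x t))"

definition maurer_cartan :: "real set \<Rightarrow> form1 \<Rightarrow> form1 \<Rightarrow> form1 \<Rightarrow> bool" where
  "maurer_cartan S \<alpha> \<beta> \<gamma> \<longleftrightarrow>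
     has_exterior_derivative S \<alpha> (form_wedge \<beta> \<alpha>) \<and>
     has_exterior_derivative S \<beta> (\<lambda>x t. 2 * form_wedge \<gamma> \<alpha> x t) \<and>
     has_exterior_derivative S \<gamma> (form_wedge \<gamma> \<beta>)"

lemma riccati_completely_integrable:
  assumes "maurer_cartan S \<alpha> \<beta> \<gamma>"
  shows "completely_integrable S (riccati_pfaff \<alpha> \<beta> \<gamma>)"
  unfolding completely_integrable_def riccati_pfaff_def fst_conv snd_conv
proof (intro allI ballI)
  fix x t z assume t: "t \<in> S"
  have d\<alpha>: "has_exterior_derivative S \<alpha> (form_wedge \<beta> \<alpha>)"
    and d\<beta>: "has_exterior_derivative S \<beta> (\<lambda>x t. 2 * form_wedge \<gamma> \<alpha> x t)"
    and d\<gamma>: "has_exterior_derivative S \<gamma> (form_wedge \<gamma> \<beta>)"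
    using assms unfolding maurer_cartan_def by auto
  obtain \<alpha>t \<alpha>x where \<alpha>':
      "((\<lambda>s. fst \<alpha> x s) has_real_derivative \<alpha>t) (at t within S)"
      "((\<lambda>y. snd \<alpha> y t) has_real_derivative \<alpha>x) (at x)"
    and d\<alpha>_eq: "form_wedge \<beta> \<alpha> x t = \<alpha>x - \<alpha>t"
    using d\<alpha> t by (rule has_exterior_derivativeE)
  obtain \<beta>t \<beta>x where \<beta>':
      "((\<lambda>s. fst \<beta> x s) has_real_derivative \<beta>t) (at t within S)"
      "((\<lambda>y. snd \<beta> y t) has_real_derivative \<beta>x) (at x)"
    and d\<beta>_eq: "2 * form_wedge \<gamma> \<alpha> x t = \<beta>x - \<beta>t"
    using d\<beta> t by (rule has_exterior_derivativeE)
  obtain \<gamma>t \<gamma>x where \<gamma>':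
      "((\<lambda>s. fst \<gamma> x s) has_real_derivative \<gamma>t) (at t within S)"
      "((\<lambda>y. snd \<gamma> y t) has_real_derivative \<gamma>x) (at x)"
    and d\<gamma>_eq: "form_wedge \<gamma> \<beta> x t = \<gamma>x - \<gamma>t"
    using d\<gamma> t by (rule has_exterior_derivativeE)
  show "\<exists>Pt Pz Qx Qz.
      ((\<lambda>s. fst \<alpha> x s + z * fst \<beta> x s + z\<^sup>2 * fst \<gamma> x s) has_real_derivative Pt) (at t within S) \<and>
      ((\<lambda>w. fst \<alpha> x t + w * fst \<beta> x t + w\<^sup>2 * fst \<gamma> x t) has_real_derivative Pz) (at z) \<and>
      ((\<lambda>y. snd \<alpha> y t + z * snd \<beta> y t + z\<^sup>2 * snd \<gamma> y t) has_real_derivative Qx) (at x) \<and>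
      ((\<lambda>w. snd \<alpha> x t + w * snd \<beta> x t + w\<^sup>2 * snd \<gamma> x t) has_real_derivative Qz) (at z) \<and>
      Pt + Pz * (snd \<alpha> x t + z * snd \<beta> x t + z\<^sup>2 * snd \<gamma> x t)
        = Qx + Qz * (fst \<alpha> x t + z * fst \<beta> x t + z\<^sup>2 * fst \<gamma> x t)"
    by (rule exI[of _ "\<alpha>t + z * \<beta>t + z\<^sup>2 * \<gamma>t"], rule exI[of _ "fst \<beta> x t + 2 * z * fst \<gamma> x t"],
        rule exI[of _ "\<alpha>x + z * \<beta>x + z\<^sup>2 * \<gamma>x"], rule exI[of _ "snd \<beta> x t + 2 * z * snd \<gamma> x t"],
        intro conjI)
      (auto intro!: derivative_eq_intros \<alpha>' \<beta>' \<gamma>',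
        use d\<alpha>_eq d\<beta>_eq d\<gamma>_eq in \<open>unfold form_wedge_def, algebra\<close>)
qed

lemma riccati_solution_closed:
  assumes mc: "maurer_cartan S \<alpha> \<beta> \<gamma>" and sol: "pfaff_solution S (riccati_pfaff \<alpha> \<beta> \<gamma>) G"
  shows "closed_on S (form_add \<beta> (form_fmult (\<lambda>x t. 2 * G x t) \<gamma>))"
proof -
  define dG :: form1 where "dG =
    ((\<lambda>x t. fst \<alpha> x t + G x t * fst \<beta> x t + (G x t)\<^sup>2 * fst \<gamma> x t),
     (\<lambda>x t. snd \<alpha> x t + G x t * snd \<beta> x t + (G x t)\<^sup>2 * snd \<gamma> x t))"
  have G_x: "((\<lambda>y. G y t) has_real_derivative fst dG x t) (at x)"
    and G_t: "((\<lambda>s. G x s) has_real_derivative snd dG x t) (at t within S)" if "t \<in> S" for x t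
    using sol that unfolding pfaff_solution_def riccati_pfaff_def dG_def by auto
  from mc have "has_exterior_derivative S (form_add \<beta> (form_fmult (\<lambda>x t. 2 * G x t) \<gamma>))
      (\<lambda>x t. 2 * form_wedge \<gamma> \<alpha> x t
        + (form_wedge (form_fmult (\<lambda>_ _. 2) dG) \<gamma> x t + 2 * G x t * form_wedge \<gamma> \<beta> x t))"
    unfolding maurer_cartan_def
    by (intro has_exterior_derivative_add has_exterior_derivative_fmult)
      (auto simp: form_fmult_def intro!: DERIV_cmult G_x G_t)
  then show ?thesis
    unfolding closed_on_iff_has_exterior_derivative_0
    by (rule has_exterior_derivative_cong)
      (simp add: form_wedge_def form_fmult_def dG_def algebra_simps power2_eq_square)
qed

definition pseudospherical :: "real set \<Rightarrow> form1 \<Rightarrow> form1 \<Rightarrow> form1 \<Rightarrow> bool" where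
  "pseudospherical S \<omega>1 \<omega>2 \<omega>3 \<longleftrightarrow>
     has_exterior_derivative S \<omega>1 (form_wedge \<omega>3 \<omega>2) \<and>
     has_exterior_derivative S \<omega>2 (form_wedge \<omega>1 \<omega>3) \<and>
     has_exterior_derivative S \<omega>3 (form_wedge \<omega>1 \<omega>2)"

lemma pseudospherical_riccati_Gamma:
  assumes "pseudospherical S \<omega>1 \<omega>2 \<omega>3"
  shows "completely_integrable S (riccati_Gamma \<omega>1 \<omega>2 \<omega>3)"
    and "pfaff_solution S (riccati_Gamma \<omega>1 \<omega>2 \<omega>3) G
      \<Longrightarrow> closed_on S (form_sub \<omega>1 (form_fmult G (form_sub \<omega>3 \<omega>2)))"
proof -
  define \<alpha> where "\<alpha> = form_fmult (\<lambda>_ _. -1/2) (form_add \<omega>3 \<omega>2)"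
  define \<gamma> where "\<gamma> = form_fmult (\<lambda>_ _. -1/2) (form_sub \<omega>3 \<omega>2)"
  have d1: "has_exterior_derivative S \<omega>1 (form_wedge \<omega>3 \<omega>2)"
    and d2: "has_exterior_derivative S \<omega>2 (form_wedge \<omega>1 \<omega>3)"
    and d3: "has_exterior_derivative S \<omega>3 (form_wedge \<omega>1 \<omega>2)"
    using assms unfolding pseudospherical_def by auto
  have mc: "maurer_cartan S \<alpha> \<omega>1 \<gamma>"
    unfolding maurer_cartan_def \<alpha>_def \<gamma>_def
    by (intro conjI has_exterior_derivative_cong[OF d1]
        has_exterior_derivative_cong[OF has_exterior_derivative_scale[OF has_exterior_derivative_add[OF d3 d2]]]
        has_exterior_derivative_cong[OF has_exterior_derivative_scale[OF has_exterior_derivative_sub[OF d3 d2]]])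
      (auto simp: form_wedge_def form_fmult_def form_add_def form_sub_def algebra_simps)
  have Gamma_eq: "riccati_Gamma \<omega>1 \<omega>2 \<omega>3 = riccati_pfaff \<alpha> \<omega>1 \<gamma>"
    unfolding riccati_Gamma_def riccati_pfaff_def \<alpha>_def \<gamma>_def form_fmult_def form_add_def form_sub_def
    by (simp add: fun_eq_iff field_simps)
  have theta_eq: "form_sub \<omega>1 (form_fmult G (form_sub \<omega>3 \<omega>2))
      = form_add \<omega>1 (form_fmult (\<lambda>x t. 2 * G x t) \<gamma>)"
    unfolding \<gamma>_def form_fmult_def form_add_def form_sub_def by (simp add: fun_eq_iff field_simps)
  show "completely_integrable S (riccati_Gamma \<omega>1 \<omega>2 \<omega>3)"
    unfolding Gamma_eq using mc by (rule riccati_completely_integrable)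
  show "closed_on S (form_sub \<omega>1 (form_fmult G (form_sub \<omega>3 \<omega>2)))"
    if "pfaff_solution S (riccati_Gamma \<omega>1 \<omega>2 \<omega>3) G"
    using riccati_solution_closed[OF mc] that unfolding Gamma_eq theta_eq by blast
qed

lemma pseudospherical_riccati_gamma:
  assumes "pseudospherical S \<omega>1 \<omega>2 \<omega>3"
  shows "completely_integrable S (riccati_gamma \<omega>1 \<omega>2 \<omega>3)"
    and "pfaff_solution S (riccati_gamma \<omega>1 \<omega>2 \<omega>3) g
      \<Longrightarrow> closed_on S (form_add (form_neg \<omega>1) (form_fmult g (form_add \<omega>3 \<omega>2)))"
proof -
  define \<alpha> where "\<alpha> = form_fmult (\<lambda>_ _. 1/2) (form_sub \<omega>3 \<omega>2)"
  define \<gamma> where "\<gamma> = form_fmult (\<lambda>_ _. 1/2) (form_add \<omega>3 \<omega>2)"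
  have d1: "has_exterior_derivative S \<omega>1 (form_wedge \<omega>3 \<omega>2)"
    and d2: "has_exterior_derivative S \<omega>2 (form_wedge \<omega>1 \<omega>3)"
    and d3: "has_exterior_derivative S \<omega>3 (form_wedge \<omega>1 \<omega>2)"
    using assms unfolding pseudospherical_def by auto
  have mc: "maurer_cartan S \<alpha> (form_neg \<omega>1) \<gamma>"
    unfolding maurer_cartan_def \<alpha>_def \<gamma>_def
    by (intro conjI has_exterior_derivative_cong[OF has_exterior_derivative_neg[OF d1]]
        has_exterior_derivative_cong[OF has_exterior_derivative_scale[OF has_exterior_derivative_add[OF d3 d2]]]
        has_exterior_derivative_cong[OF has_exterior_derivative_scale[OF has_exterior_derivative_sub[OF d3 d2]]])
      (auto simp: form_wedge_def form_fmult_def form_add_def form_sub_def form_neg_def algebra_simps)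
  have gamma_eq: "riccati_gamma \<omega>1 \<omega>2 \<omega>3 = riccati_pfaff \<alpha> (form_neg \<omega>1) \<gamma>"
    unfolding riccati_gamma_def riccati_pfaff_def \<alpha>_def \<gamma>_def
      form_fmult_def form_add_def form_sub_def form_neg_def
    by (simp add: fun_eq_iff field_simps)
  have theta_eq: "form_add (form_neg \<omega>1) (form_fmult g (form_add \<omega>3 \<omega>2))
      = form_add (form_neg \<omega>1) (form_fmult (\<lambda>x t. 2 * g x t) \<gamma>)"
    unfolding \<gamma>_def form_fmult_def form_add_def by (simp add: fun_eq_iff field_simps)
  show "completely_integrable S (riccati_gamma \<omega>1 \<omega>2 \<omega>3)"
    unfolding gamma_eq using mc by (rule riccati_completely_integrable)
  show "closed_on S (form_add (form_neg \<omega>1) (form_fmult g (form_add \<omega>3 \<omega>2)))"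
    if "pfaff_solution S (riccati_gamma \<omega>1 \<omega>2 \<omega>3) g"
    using riccati_solution_closed[OF mc] that unfolding gamma_eq theta_eq by blast
qed

lemma pseudospherical_omega:
  assumes eps: "eps\<^sup>2 = 1" and dm: "has_exterior_derivative S (m, F) (\<lambda>x t. -2 * F x t)"
  shows "pseudospherical S (omega1 m F) (omega2 mu eps m F) (omega3 mu eps m F)"
proof -
  have "(eps * sqrt (1 + mu\<^sup>2))\<^sup>2 = 1 + mu\<^sup>2"
    using eps by (simp add: power_mult_distrib)
  then have wedges:
    "form_wedge (omega3 mu eps m F) (omega2 mu eps m F) x t = -2 * F x t"
    "form_wedge (omega1 m F) (omega3 mu eps m F) x t = mu * (-2 * F x t)"
    "form_wedge (omega1 m F) (omega2 mu eps m F) x t = eps * sqrt (1 + mu\<^sup>2) * (-2 * F x t)"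
    for x t
    unfolding form_wedge_def omega1_def omega2_def omega3_def fst_conv snd_conv by algebra+
  show ?thesis
    unfolding pseudospherical_def wedges
    unfolding omega1_def omega2_def omega3_def
    by (intro conjI dm has_exterior_derivative_affine[OF dm])
qed

lemma dp_has_exterior_derivative:
  fixes u ux uxx uxxx ut utxx :: "real \<Rightarrow> real \<Rightarrow> real"
  assumes u_x:   "\<And>x t. t \<in> S \<Longrightarrow> ((\<lambda>y. u y t) has_real_derivative ux x t) (at x)"
    and u_xx:  "\<And>x t. t \<in> S \<Longrightarrow> ((\<lambda>y. ux y t) has_real_derivative uxx x t) (at x)"
    and u_xxx: "\<And>x t. t \<in> S \<Longrightarrow> ((\<lambda>y. uxx y t) has_real_derivative uxxx x t) (at x)"
    and u_t:   "\<And>x t. t \<in> S \<Longrightarrow> ((\<lambda>s. u x s) has_real_derivative ut x t) (at t within S)"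
    and u_xxt: "\<And>x t. t \<in> S \<Longrightarrow> ((\<lambda>s. uxx x s) has_real_derivative utxx x t) (at t within S)"
    and DP: "\<And>x t. t \<in> S \<Longrightarrow>
       ut x t - utxx x t + 4 * u x t * ux x t = 3 * ux x t * uxx x t + u x t * uxxx x t"
  shows "has_exterior_derivative S (dp_m u uxx, dp_F u ux uxx) (\<lambda>x t. -2 * dp_F u ux uxx x t)"
  unfolding has_exterior_derivative_def dp_m_def dp_F_def fst_conv snd_conv
proof (intro allI ballI)
  fix x t assume t: "t \<in> S"
  show "\<exists>ft gx. ((\<lambda>s. u x s - uxx x s) has_real_derivative ft) (at t within S) \<and>
      ((\<lambda>y. (ux y t)\<^sup>2 - 2 * u y t * ux y t + u y t * uxx y t) has_real_derivative gx) (at x) \<and>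
      -2 * ((ux x t)\<^sup>2 - 2 * u x t * ux x t + u x t * uxx x t) = gx - ft"
  proof (rule exI[of _ "ut x t - utxx x t"],
      rule exI[of _ "3 * ux x t * uxx x t - 2 * (ux x t)\<^sup>2 - 2 * u x t * uxx x t + u x t * uxxx x t"],
      intro conjI)
    show "-2 * ((ux x t)\<^sup>2 - 2 * u x t * ux x t + u x t * uxx x t) =
        3 * ux x t * uxx x t - 2 * (ux x t)\<^sup>2 - 2 * u x t * uxx x t + u x t * uxxx x t - (ut x t - utxx x t)"
      using DP[OF t] by (simp add: algebra_simps power2_eq_square)
  qed (auto intro!: derivative_eq_intros u_x[OF t] u_xx[OF t] u_xxx[OF t] u_t[OF t] u_xxt[OF t]
      simp: power2_eq_square)
qed

theorem proposition8p1:
  fixes u ux uxx uxxx ut utx utxx :: "real \<Rightarrow> real \<Rightarrow> real"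
    and T mu eps :: real
  defines "S \<equiv> {0..<T}"
  defines "w1 \<equiv> omega1 (dp_m u uxx) (dp_F u ux uxx)"
      and "w2 \<equiv> omega2 mu eps (dp_m u uxx) (dp_F u ux uxx)"
      and "w3 \<equiv> omega3 mu eps (dp_m u uxx) (dp_F u ux uxx)"
  assumes eps: "eps = 1 \<or> eps = -1"
    and u_x:   "\<And>x t. t \<in> S \<Longrightarrow> ((\<lambda>y. u y t) has_real_derivative ux x t) (at x)"
    and u_xx:  "\<And>x t. t \<in> S \<Longrightarrow> ((\<lambda>y. ux y t) has_real_derivative uxx x t) (at x)"
    and u_xxx: "\<And>x t. t \<in> S \<Longrightarrow> ((\<lambda>y. uxx y t) has_real_derivative uxxx x t) (at x)"
    and u_t:   "\<And>x t. t \<in> S \<Longrightarrow> ((\<lambda>s. u x s) has_real_derivative ut x t) (at t within S)"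
    and u_tx:  "\<And>x t. t \<in> S \<Longrightarrow> ((\<lambda>y. ut y t) has_real_derivative utx x t) (at x)"
    and u_txx: "\<And>x t. t \<in> S \<Longrightarrow> ((\<lambda>y. utx y t) has_real_derivative utxx x t) (at x)"
    and u_xxt: "\<And>x t. t \<in> S \<Longrightarrow> ((\<lambda>s. uxx x s) has_real_derivative utxx x t) (at t within S)"
    and DP: "\<And>x t. t \<in> S \<Longrightarrow>
       ut x t - utxx x t + 4 * u x t * ux x t = 3 * ux x t * uxx x t + u x t * uxxx x t"
  shows "completely_integrable S (riccati_Gamma w1 w2 w3)
       \<and> completely_integrable S (riccati_gamma w1 w2 w3)
       \<and> (\<forall>G. pfaff_solution S (riccati_Gamma w1 w2 w3) G \<longrightarrow>
              closed_on S (form_sub w1 (form_fmult G (form_sub w3 w2))))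
       \<and> (\<forall>g. pfaff_solution S (riccati_gamma w1 w2 w3) g \<longrightarrow>
              closed_on S (form_add (form_neg w1) (form_fmult g (form_add w3 w2))))"
proof -
  have "has_exterior_derivative S (dp_m u uxx, dp_F u ux uxx) (\<lambda>x t. -2 * dp_F u ux uxx x t)"
    by (rule dp_has_exterior_derivative[OF u_x u_xx u_xxx u_t u_xxt DP])
  moreover have "eps\<^sup>2 = 1"
    using eps by auto
  ultimately have "pseudospherical S w1 w2 w3"
    unfolding w1_def w2_def w3_def by (intro pseudospherical_omega)
  then show ?thesis
    using pseudospherical_riccati_Gamma pseudospherical_riccati_gamma by blast
qed

end
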